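(* Let $f:X\to Y$ be a continuous surjective open map between compact Hausdorff spaces. Then $Hf:HX\to HY$ has a degenerate fiber (a fiber $(Hf)^{-1}(\nu)$ that is a single point) if and only if $f$ has a degenerate fiber (a fiber $f^{-1}(y)$ that is a single point).
   Context: For a compact Hausdorff space $X$, let $HM(X)$ be the set of all maps $\alpha:[0,1)\to X$ for which there exist $0=t_0<t_1<\dots<t_n=1$ such that $\alpha$ is constant on each $[t_i,t_{i+1})$. Let $C(X)$ be the set of continuous real-valued functions on $X$. For $\varphi\in C(X)$ and $0\le a<b\le 1$ define $\varphi_{(a,b)}:HM(X)\to\mathbb{R}$ by $\varphi_{(a,b)}(\alpha)=\frac{1}{b-a}\int_a^b\varphi(\alpha(t))\,dt$, and let $S_{HM}(X)$ be the set of all such functions. The map $\alpha\mapsto(\varphi_{(a,b)}(\alpha))$ embeds $HM(X)$ into the product $\prod_{\varphi_{(a,b)}\in S_{HM}(X)}[\min\varphi,\max\varphi]$; $HX$ is the closure of the image of $HM(X)$, and $p_{\varphi_{(a,b)}}:HX\to\mathbb{R}$ is the coordinate projection. For continuous $f:X\to Y$, $Hf:HX\to HY$ is the unique continuous map with $p_{\varphi_{(a,b)}}\circ Hf=p_{(\varphi\circ f)_{(a,b)}}$ for all $\varphi\in C(Y)$, $0\le a<b\le1$ (it extends $\alpha\mapsto f\circ\alpha$). *)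

theory Defs
  imports "HOL-Analysis.Analysis"
begin

text \<open>HM(X): step maps [0,1) -> X, represented as functions that are
  'undefined' outside [0,1) (so that each map [0,1) -> X has exactly one representative).\<close>
definition HM :: "'a topology \<Rightarrow> (real \<Rightarrow> 'a) set" where
  "HM X = {\<alpha>. (\<forall>t\<in>{0..<1}. \<alpha> t \<in> topspace X) \<and> (\<forall>t. t \<notin> {0..<1} \<longrightarrow> \<alpha> t = undefined) \<and>
     (\<exists>(n::nat) (ts::nat \<Rightarrow> real). ts 0 = 0 \<and> ts n = 1 \<and> (\<forall>i<n. ts i < ts (Suc i)) \<and>
        (\<forall>i<n. \<forall>t\<in>{ts i..<ts (Suc i)}. \<alpha> t = \<alpha> (ts i)))}"

definition avg_fun :: "'a topology \<Rightarrow> ('a \<Rightarrow> real) \<Rightarrow> real \<Rightarrow> real \<Rightarrow> ((real \<Rightarrow> 'a) \<Rightarrow> real)" where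
  "avg_fun X \<phi> a b = (\<lambda>\<alpha>\<in>HM X. (1 / (b - a)) * integral {a..b} (\<lambda>t. \<phi> (\<alpha> t)))"

definition S_HM :: "'a topology \<Rightarrow> ((real \<Rightarrow> 'a) \<Rightarrow> real) set" where
  "S_HM X = {avg_fun X \<phi> a b | \<phi> a b. continuous_map X euclideanreal \<phi> \<and> 0 \<le> a \<and> a < b \<and> b \<le> 1}"

definition H_prod :: "'a topology \<Rightarrow> (((real \<Rightarrow> 'a) \<Rightarrow> real) \<Rightarrow> real) topology" where
  "H_prod X = product_topology (\<lambda>_. euclideanreal) (S_HM X)"

definition H_emb :: "'a topology \<Rightarrow> (real \<Rightarrow> 'a) \<Rightarrow> (((real \<Rightarrow> 'a) \<Rightarrow> real) \<Rightarrow> real)" where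
  "H_emb X \<alpha> = (\<lambda>s\<in>S_HM X. s \<alpha>)"

definition HX :: "'a topology \<Rightarrow> (((real \<Rightarrow> 'a) \<Rightarrow> real) \<Rightarrow> real) topology" where
  "HX X = subtopology (H_prod X) ((H_prod X) closure_of (H_emb X ` HM X))"

text \<open>p_{phi_(a,b)} o Hf = p_{(phi o f)_(a,b)}: the index phi_(a,b) of S_HM(Y) is sent to
  (phi o f)_(a,b), i.e. alpha |-> phi_(a,b)(f o alpha).\<close>
definition H_pull :: "'a topology \<Rightarrow> ('a \<Rightarrow> 'b) \<Rightarrow> ((real \<Rightarrow> 'b) \<Rightarrow> real) \<Rightarrow> ((real \<Rightarrow> 'a) \<Rightarrow> real)" where
  "H_pull X f s = (\<lambda>\<alpha>\<in>HM X. s (\<lambda>t\<in>{0..<1}. f (\<alpha> t)))"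

definition Hmap :: "'a topology \<Rightarrow> 'b topology \<Rightarrow> ('a \<Rightarrow> 'b) \<Rightarrow>
    (((real \<Rightarrow> 'a) \<Rightarrow> real) \<Rightarrow> real) \<Rightarrow> (((real \<Rightarrow> 'b) \<Rightarrow> real) \<Rightarrow> real)" where
  "Hmap X Y f \<nu> = (\<lambda>s\<in>S_HM Y. \<nu> (H_pull X f s))"

definition has_degenerate_fiber :: "'a topology \<Rightarrow> 'b topology \<Rightarrow> ('a \<Rightarrow> 'b) \<Rightarrow> bool" where
  "has_degenerate_fiber X Y g \<longleftrightarrow> (\<exists>y\<in>topspace Y. \<exists>x. {x' \<in> topspace X. g x' = y} = {x})"

end

(*
  Points of HX X are limits of step maps, hence determined by their values on the averages
  phi_(a,b); pointwise bounds |phi - c| <= e + k psi on X pass to the averages and, being closed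
  conditions, to all of HX X.

  If f^-1(y) = {x} and nu lies over the constant path at y, Urysohn's lemma gives psi on Y with
  psi(y) = 0 and |phi - phi(x)| <= eps + 2B (psi o f); the averages of psi o f vanish at nu, so
  nu(phi_(a,b)) = phi(x) and nu is the constant path at x.

  If no fibre of f is a singleton, openness of f and compactness of Y give finitely many phi_k
  such that every x has points lo x, hi x in its fibre with phi_(kappa x)(hi x) - phi_(kappa x)(lo x)
  >= 1/3. If the fibre of Hf over Hf(nu) were {nu}, compactness of HX X would put into any
  neighbourhood of nu all step maps beta with f o beta = f o alpha, for a suitable alpha. Moving
  alpha fibrewise to lo resp. hi then changes the sum of the averages of the phi_k by at least 1/3,
  which a small neighbourhood of nu does not allow.
*)
theory Submission
  imports Defs
begin

abbreviation step_comp :: "('a \<Rightarrow> 'b) \<Rightarrow> (real \<Rightarrow> 'a) \<Rightarrow> real \<Rightarrow> 'b" where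
  "step_comp G \<alpha> \<equiv> \<lambda>t\<in>{0..<1}. G (\<alpha> t)"

abbreviation const_step :: "'a \<Rightarrow> real \<Rightarrow> 'a" where
  "const_step x \<equiv> \<lambda>t\<in>{0..<1::real}. x"

lemma HM_E:
  assumes "\<alpha> \<in> HM X"
  obtains n ts where "\<And>t. t \<in> {0..<1} \<Longrightarrow> \<alpha> t \<in> topspace X"
    "ts 0 = 0" "ts n = (1::real)" "\<And>i. i < n \<Longrightarrow> ts i < ts (Suc i)"
    "\<And>i t. i < n \<Longrightarrow> t \<in> {ts i..<ts (Suc i)} \<Longrightarrow> \<alpha> t = \<alpha> (ts i)"
  using assms unfolding HM_def by blast

lemma HM_in_topspace: "\<alpha> \<in> HM X \<Longrightarrow> t \<in> {0..<1} \<Longrightarrow> \<alpha> t \<in> topspace X"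
  by (erule HM_E) blast

lemma partition_mono:
  fixes ts :: "nat \<Rightarrow> real"
  assumes "\<And>i. i < n \<Longrightarrow> ts i < ts (Suc i)" "i \<le> j" "j \<le> n"
  shows "ts i \<le> ts j"
  by (rule lift_Suc_mono_le_ivl[of "{..<n}"]) (use assms in \<open>auto intro: less_imp_le\<close>)

lemma step_comp_in_HM:
  assumes "\<alpha> \<in> HM X" "\<And>x. x \<in> topspace X \<Longrightarrow> G x \<in> topspace Z"
  shows "step_comp G \<alpha> \<in> HM Z"
proof -
  obtain n ts where \<alpha>: "\<And>t. t \<in> {0..<1} \<Longrightarrow> \<alpha> t \<in> topspace X"
    and ts: "ts 0 = 0" "ts n = (1::real)" "\<And>i. i < n \<Longrightarrow> ts i < ts (Suc i)"
    and step: "\<And>i t. i < n \<Longrightarrow> t \<in> {ts i..<ts (Suc i)} \<Longrightarrow> \<alpha> t = \<alpha> (ts i)"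
    using assms(1) by (rule HM_E) blast
  have "\<forall>i<n. \<forall>t\<in>{ts i..<ts (Suc i)}. step_comp G \<alpha> t = step_comp G \<alpha> (ts i)"
  proof (intro allI impI ballI)
    fix i t assume it: "i < n" "t \<in> {ts i..<ts (Suc i)}"
    have "0 \<le> ts i"
      using partition_mono[where ts=ts and n=n and i=0 and j=i, OF ts(3)] ts(1) it(1) by simp
    moreover have "ts (Suc i) \<le> 1"
      using partition_mono[where ts=ts and n=n and i="Suc i" and j=n, OF ts(3)] ts(2) it(1) by simp
    ultimately show "step_comp G \<alpha> t = step_comp G \<alpha> (ts i)"
      using it ts(3)[OF it(1)] by (simp add: step[OF it])
  qed
  moreover have "\<forall>t\<in>{0..<1}. step_comp G \<alpha> t \<in> topspace Z"
    using assms(2)[OF \<alpha>] by simp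
  moreover have "\<forall>t. t \<notin> {0..<1} \<longrightarrow> step_comp G \<alpha> t = undefined" by simp
  ultimately show ?thesis
    unfolding HM_def using ts(1,2,3) by blast
qed

lemma const_step_in_HM: "x \<in> topspace X \<Longrightarrow> const_step x \<in> HM X"
  unfolding HM_def by (rule CollectI, intro conjI exI[of _ "1::nat"] exI[of _ real]) auto

lemma integrable_HM:
  assumes "\<alpha> \<in> HM X" "0 \<le> a" "b \<le> 1"
  shows "(\<lambda>t. h (\<alpha> t) :: real) integrable_on {a..b}"
proof -
  obtain n ts where ts: "ts 0 = 0" "ts n = (1::real)" "\<And>i. i < n \<Longrightarrow> ts i < ts (Suc i)"
    and step: "\<And>i t. i < n \<Longrightarrow> t \<in> {ts i..<ts (Suc i)} \<Longrightarrow> \<alpha> t = \<alpha> (ts i)"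
    using assms(1) by (rule HM_E) blast
  have "(\<lambda>t. h (\<alpha> t)) integrable_on {0..ts k}" if "k \<le> n" for k
    using that
  proof (induction k)
    case 0
    then show ?case using ts(1) integrable_on_refl[of _ 0] by (simp add: cbox_interval)
  next
    case (Suc k)
    then have k: "k < n" by simp
    have "h (\<alpha> t) = h (\<alpha> (ts k))" if "t \<in> {ts k..ts (Suc k)} - {ts (Suc k)}" for t
      using step[OF k, of t] that by simp
    then have I2: "(\<lambda>t. h (\<alpha> t)) integrable_on {ts k..ts (Suc k)}"
      by (rule integrable_spike[OF integrable_const_ivl negligible_sing, rotated])
    have "0 \<le> ts k"
      using partition_mono[where ts=ts and n=n and i=0 and j=k, OF ts(3)] ts(1) k by simp
    moreover have "ts k \<le> ts (Suc k)" using ts(3)[OF k] by simp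
    moreover have "(\<lambda>t. h (\<alpha> t)) integrable_on {0..ts k}" using Suc.IH k by simp
    ultimately show ?case using I2 by (rule Henstock_Kurzweil_Integration.integrable_combine)
  qed
  from this[of n] ts(2) have "(\<lambda>t. h (\<alpha> t)) integrable_on {0..1}" by simp
  then show ?thesis by (rule integrable_on_subinterval) (use assms in auto)
qed

lemma integral_cong_unit_interval:
  assumes "0 \<le> a" "b \<le> 1" "\<And>t. t \<in> {0..<1} \<Longrightarrow> g t = h t"
  shows "integral {a..b} g = integral {a..b} (h :: real \<Rightarrow> real)"
  by (rule integral_spike[OF negligible_sing[of 1]]) (use assms in \<open>auto simp: less_le\<close>)

lemma HM_integral_mono:
  fixes g h :: "'a \<Rightarrow> real"
  assumes "\<alpha> \<in> HM X" "0 \<le> a" "b \<le> 1" "\<And>x. x \<in> topspace X \<Longrightarrow> g x \<le> h x"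
  shows "integral {a..b} (\<lambda>t. g (\<alpha> t)) \<le> integral {a..b} (\<lambda>t. h (\<alpha> t))"
proof -
  define g' where "g' t = (if t \<in> {0..<1} then g (\<alpha> t) else h (\<alpha> t))" for t
  have "integral {a..b} (\<lambda>t. g (\<alpha> t)) = integral {a..b} g'"
    by (rule integral_cong_unit_interval[OF assms(2,3)]) (simp add: g'_def)
  also have "\<dots> \<le> integral {a..b} (\<lambda>t. h (\<alpha> t))"
  proof (rule integral_le)
    show "g' integrable_on {a..b}"
      by (rule integrable_spike[OF integrable_HM[OF assms(1-3), of g] negligible_sing[of 1]])
         (use assms(2,3) in \<open>auto simp: g'_def\<close>)
    show "(\<lambda>t. h (\<alpha> t)) integrable_on {a..b}" by (rule integrable_HM[OF assms(1-3)])
    show "g' t \<le> h (\<alpha> t)" for t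
      using assms(4)[OF HM_in_topspace[OF assms(1)]] by (simp add: g'_def)
  qed
  finally show ?thesis .
qed

lemma avg_fun_in_S_HM:
  "continuous_map X euclideanreal \<phi> \<Longrightarrow> 0 \<le> a \<Longrightarrow> a < b \<Longrightarrow> b \<le> 1 \<Longrightarrow> avg_fun X \<phi> a b \<in> S_HM X"
  unfolding S_HM_def by blast

lemma S_HM_E:
  assumes "s \<in> S_HM X"
  obtains \<phi> a b where "s = avg_fun X \<phi> a b" "continuous_map X euclideanreal \<phi>" "0 \<le> a" "a < b" "b \<le> 1"
  using assms unfolding S_HM_def by blast

lemma avg_fun_const_step:
  assumes "0 \<le> a" "a < b" "b \<le> 1" "x \<in> topspace X"
  shows "avg_fun X \<phi> a b (const_step x) = \<phi> x"
proof -
  have "integral {a..b} (\<lambda>t. \<phi> (const_step x t)) = integral {a..b} (\<lambda>t. \<phi> x)"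
    by (rule integral_cong_unit_interval) (use assms in auto)
  then show ?thesis
    unfolding avg_fun_def restrict_apply'[OF const_step_in_HM[OF assms(4)]] using assms(2) by simp
qed

lemma avg_fun_step_comp:
  assumes "\<alpha> \<in> HM X" "\<And>x. x \<in> topspace X \<Longrightarrow> G x \<in> topspace Z" "0 \<le> a" "b \<le> 1"
  shows "avg_fun Z \<phi> a b (step_comp G \<alpha>) = avg_fun X (\<phi> \<circ> G) a b \<alpha>"
proof -
  have "integral {a..b} (\<lambda>t. \<phi> (step_comp G \<alpha> t)) = integral {a..b} (\<lambda>t. (\<phi> \<circ> G) (\<alpha> t))"
    by (rule integral_cong_unit_interval[OF assms(3,4)]) simp
  moreover have "avg_fun Z \<phi> a b (step_comp G \<alpha>) = 1 / (b - a) * integral {a..b} (\<lambda>t. \<phi> (step_comp G \<alpha> t))"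
    unfolding avg_fun_def by (rule restrict_apply'[OF step_comp_in_HM[OF assms(1,2)]])
  ultimately show ?thesis using assms(1) by (simp add: avg_fun_def)
qed

lemma H_pull_avg_fun:
  assumes "\<And>x. x \<in> topspace X \<Longrightarrow> f x \<in> topspace Y" "0 \<le> a" "b \<le> 1"
  shows "H_pull X f (avg_fun Y \<phi> a b) = avg_fun X (\<phi> \<circ> f) a b"
proof -
  have "avg_fun Y \<phi> a b (step_comp f \<alpha>) = avg_fun X (\<phi> \<circ> f) a b \<alpha>" if "\<alpha> \<in> HM X" for \<alpha>
    by (rule avg_fun_step_comp[OF that assms])
  then show ?thesis
    unfolding H_pull_def avg_fun_def[of X "\<phi> \<circ> f"] by (intro restrict_ext) simp
qed

lemma H_pull_in_S_HM:
  assumes "continuous_map X Y f" "s \<in> S_HM Y"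
  shows "H_pull X f s \<in> S_HM X"
proof -
  obtain \<phi> a b where s: "s = avg_fun Y \<phi> a b" "continuous_map Y euclideanreal \<phi>" "0 \<le> a" "a < b" "b \<le> 1"
    using assms(2) by (rule S_HM_E)
  have "H_pull X f s = avg_fun X (\<phi> \<circ> f) a b"
    unfolding s(1) by (rule H_pull_avg_fun) (use assms(1) s in \<open>auto simp: continuous_map_def\<close>)
  then show ?thesis
    using avg_fun_in_S_HM[OF continuous_map_compose[OF assms(1) s(2)] s(3-5)] by simp
qed

lemma H_emb_in_topspace: "H_emb X \<alpha> \<in> topspace (H_prod X)"
  by (simp add: H_emb_def H_prod_def)

lemma H_emb_apply: "s \<in> S_HM X \<Longrightarrow> H_emb X \<alpha> s = s \<alpha>"
  by (simp add: H_emb_def)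

lemma topspace_HX: "topspace (HX X) = H_prod X closure_of (H_emb X ` HM X)"
  unfolding HX_def topspace_subtopology
  using closure_of_subset_topspace[of "H_prod X" "H_emb X ` HM X"] by blast

lemma topspace_HX_subset: "topspace (HX X) \<subseteq> topspace (H_prod X)"
  unfolding topspace_HX by (rule closure_of_subset_topspace)

lemma H_emb_in_HX: "\<alpha> \<in> HM X \<Longrightarrow> H_emb X \<alpha> \<in> topspace (HX X)"
  unfolding topspace_HX using closure_of_subset[of "H_emb X ` HM X" "H_prod X"] H_emb_in_topspace by blast

lemma HX_eqI:
  assumes "\<mu> \<in> topspace (HX X)" "\<nu> \<in> topspace (HX X)" "\<And>s. s \<in> S_HM X \<Longrightarrow> \<mu> s = \<nu> s"
  shows "\<mu> = \<nu>"
proof (rule PiE_ext)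
  show "\<mu> \<in> S_HM X \<rightarrow>\<^sub>E UNIV" "\<nu> \<in> S_HM X \<rightarrow>\<^sub>E UNIV"
    using assms(1,2) topspace_HX_subset[of X] by (auto simp: H_prod_def)
qed (rule assms(3))

lemma continuous_map_H_prod_apply:
  "s \<in> S_HM X \<Longrightarrow> continuous_map (H_prod X) euclideanreal (\<lambda>\<nu>. \<nu> s)"
  unfolding H_prod_def by (rule continuous_map_product_projection)

lemma continuous_map_Hmap:
  assumes "continuous_map X Y f"
  shows "continuous_map (H_prod X) (H_prod Y) (Hmap X Y f)"
  unfolding H_prod_def[of Y] continuous_map_componentwise
proof (intro conjI ballI)
  show "Hmap X Y f ` topspace (H_prod X) \<subseteq> extensional (S_HM Y)"
    by (auto simp: Hmap_def)
  fix s assume "s \<in> S_HM Y"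
  then show "continuous_map (H_prod X) euclideanreal (\<lambda>\<nu>. Hmap X Y f \<nu> s)"
    using continuous_map_H_prod_apply[OF H_pull_in_S_HM[OF assms]] by (simp add: Hmap_def)
qed

lemma Hmap_H_emb:
  assumes "continuous_map X Y f" "\<alpha> \<in> HM X"
  shows "Hmap X Y f (H_emb X \<alpha>) = H_emb Y (step_comp f \<alpha>)"
proof -
  have "H_emb X \<alpha> (H_pull X f s) = s (step_comp f \<alpha>)" if "s \<in> S_HM Y" for s
    using H_emb_apply[OF H_pull_in_S_HM[OF assms(1) that]] assms(2) by (simp add: H_pull_def)
  then show ?thesis unfolding Hmap_def H_emb_def[of Y] by (rule restrict_ext)
qed

lemma continuous_map_real_bounded:
  assumes "compact_space X" "continuous_map X euclideanreal \<phi>"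
  obtains B where "\<And>x. x \<in> topspace X \<Longrightarrow> \<bar>\<phi> x\<bar> \<le> B"
proof -
  have "compactin euclideanreal (\<phi> ` topspace X)"
    using image_compactin[OF _ assms(2)] assms(1) by (simp add: compact_space_def)
  then have "bounded (\<phi> ` topspace X)" by (simp add: compact_imp_bounded)
  then show ?thesis using that unfolding bounded_real by blast
qed

lemma S_HM_bounded:
  assumes "compact_space X" "s \<in> S_HM X"
  shows "\<exists>B. \<forall>\<alpha>\<in>HM X. \<bar>s \<alpha>\<bar> \<le> B"
proof -
  obtain \<phi> a b where s: "s = avg_fun X \<phi> a b" "continuous_map X euclideanreal \<phi>" "0 \<le> a" "a < b" "b \<le> 1"
    using assms(2) by (rule S_HM_E)
  obtain B where B: "\<And>x. x \<in> topspace X \<Longrightarrow> \<bar>\<phi> x\<bar> \<le> B"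
    using continuous_map_real_bounded[OF assms(1) s(2)] by blast
  have "\<bar>s \<alpha>\<bar> \<le> B" if \<alpha>: "\<alpha> \<in> HM X" for \<alpha>
  proof -
    have "integral {a..b} (\<lambda>t. \<phi> (\<alpha> t)) \<le> integral {a..b} (\<lambda>t. B)"
      using HM_integral_mono[OF \<alpha> s(3,5), of \<phi> "\<lambda>_. B"] B by force
    moreover have "integral {a..b} (\<lambda>t. - B) \<le> integral {a..b} (\<lambda>t. \<phi> (\<alpha> t))"
      using HM_integral_mono[OF \<alpha> s(3,5), of "\<lambda>_. - B" \<phi>] B by force
    ultimately have "\<bar>integral {a..b} (\<lambda>t. \<phi> (\<alpha> t))\<bar> \<le> (b - a) * B" using s(4) by simp
    then show ?thesis
      using \<alpha> s(1,4) by (simp add: avg_fun_def abs_mult divide_le_eq mult.commute)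
  qed
  then show ?thesis by blast
qed

text \<open>\<open>HX X\<close> is closed in a product of compact intervals.\<close>
lemma compact_space_HX:
  assumes "compact_space X"
  shows "compact_space (HX X)"
proof -
  obtain B where B: "\<And>s \<alpha>. s \<in> S_HM X \<Longrightarrow> \<alpha> \<in> HM X \<Longrightarrow> \<bar>s \<alpha>\<bar> \<le> B s"
    using S_HM_bounded[OF assms] by metis
  define box where "box = PiE (S_HM X) (\<lambda>s. {- B s..B s})"
  have "compactin (H_prod X) box"
    unfolding box_def H_prod_def compactin_PiE by auto
  moreover have "H_prod X closure_of (H_emb X ` HM X) \<subseteq> box"
  proof (rule closure_of_minimal)
    show "H_emb X ` HM X \<subseteq> box"
      using B by (fastforce simp: box_def H_emb_def abs_le_iff)
    show "closedin (H_prod X) box"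
      using \<open>compactin (H_prod X) box\<close>
      by (simp add: compactin_imp_closedin H_prod_def Hausdorff_space_product_topology)
  qed
  ultimately have "compactin (H_prod X) (H_prod X closure_of (H_emb X ` HM X))"
    by (rule closed_compactin) simp
  then show ?thesis unfolding HX_def by (rule compact_space_subtopology)
qed

lemma closedin_le_real:
  assumes "continuous_map X euclideanreal F" "continuous_map X euclideanreal G"
  shows "closedin X {x \<in> topspace X. F x \<le> G x}"
proof -
  have "continuous_map X euclideanreal (\<lambda>x. G x - F x)"
    using assms by (intro continuous_intros)
  then have "closedin X {x \<in> topspace X. G x - F x \<in> {0..}}"
    by (rule closedin_continuous_map_preimage) simp
  then show ?thesis by simp
qed

lemma avg_fun_bound:
  assumes \<alpha>: "\<alpha> \<in> HM X" and ab: "0 \<le> a" "a < b" "b \<le> 1"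
    and bound: "\<And>x. x \<in> topspace X \<Longrightarrow> \<bar>\<phi> x - c\<bar> \<le> e + k * \<psi> x"
  shows "\<bar>avg_fun X \<phi> a b \<alpha> - c\<bar> \<le> e + k * avg_fun X \<psi> a b \<alpha>"
proof -
  define I where "I = integral {a..b} (\<lambda>t. \<phi> (\<alpha> t))"
  define J where "J = integral {a..b} (\<lambda>t. \<psi> (\<alpha> t))"
  have affine: "integral {a..b} (\<lambda>t. d + m * \<psi> (\<alpha> t)) = (b - a) * d + m * J" for d m
  proof -
    have "integral {a..b} (\<lambda>t. d + m * \<psi> (\<alpha> t)) = integral {a..b} (\<lambda>t. d) + integral {a..b} (\<lambda>t. m * \<psi> (\<alpha> t))"
      using integrable_HM[OF \<alpha> ab(1,3), of \<psi>] by (intro integral_add integrable_on_mult_right) auto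
    then show ?thesis using ab(2) by (simp add: J_def)
  qed
  have "I \<le> integral {a..b} (\<lambda>t. (c + e) + k * \<psi> (\<alpha> t))"
    unfolding I_def by (rule HM_integral_mono[OF \<alpha> ab(1,3)]) (use bound in force)
  then have upper: "I \<le> (b - a) * (c + e) + k * J" by (simp only: affine)
  have "integral {a..b} (\<lambda>t. (c - e) + (- k) * \<psi> (\<alpha> t)) \<le> I"
    unfolding I_def by (rule HM_integral_mono[OF \<alpha> ab(1,3)]) (use bound in force)
  then have lower: "(b - a) * (c - e) + (- k) * J \<le> I" by (simp only: affine)
  have "\<bar>I - (b - a) * c\<bar> \<le> (b - a) * e + k * J"
    using upper lower by (simp add: abs_le_iff algebra_simps)
  then have "\<bar>I - (b - a) * c\<bar> / (b - a) \<le> ((b - a) * e + k * J) / (b - a)"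
    using ab(2) by (simp add: divide_right_mono)
  moreover have "I / (b - a) - c = (I - (b - a) * c) / (b - a)"
    using ab(2) by (simp add: field_simps)
  then have "\<bar>I / (b - a) - c\<bar> = \<bar>I - (b - a) * c\<bar> / (b - a)"
    using ab(2) by (simp add: abs_div)
  ultimately have "\<bar>I / (b - a) - c\<bar> \<le> e + k * (J / (b - a))"
    using ab(2) by (simp add: add_divide_distrib)
  then show ?thesis using \<alpha> by (simp add: avg_fun_def I_def J_def)
qed

lemma HX_avg_fun_bound:
  assumes \<nu>: "\<nu> \<in> topspace (HX X)"
    and \<phi>: "continuous_map X euclideanreal \<phi>" and \<psi>: "continuous_map X euclideanreal \<psi>"
    and ab: "0 \<le> a" "a < b" "b \<le> 1"
    and bound: "\<And>x. x \<in> topspace X \<Longrightarrow> \<bar>\<phi> x - c\<bar> \<le> e + k * \<psi> x"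
  shows "\<bar>\<nu> (avg_fun X \<phi> a b) - c\<bar> \<le> e + k * \<nu> (avg_fun X \<psi> a b)"
proof -
  define s where "s = avg_fun X \<phi> a b"
  define r where "r = avg_fun X \<psi> a b"
  have sr: "s \<in> S_HM X" "r \<in> S_HM X"
    unfolding s_def r_def using avg_fun_in_S_HM \<phi> \<psi> ab by blast+
  define D where "D = {\<mu> \<in> topspace (H_prod X). \<bar>\<mu> s - c\<bar> \<le> e + k * \<mu> r}"
  have "closedin (H_prod X) D"
    unfolding D_def by (intro closedin_le_real continuous_intros continuous_map_H_prod_apply sr)
  moreover have "H_emb X \<alpha> \<in> D" if "\<alpha> \<in> HM X" for \<alpha>
  proof -
    have "\<bar>s \<alpha> - c\<bar> \<le> e + k * r \<alpha>"
      unfolding s_def r_def by (rule avg_fun_bound[OF that ab bound])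
    then show ?thesis
      unfolding D_def using H_emb_in_topspace H_emb_apply[OF sr(1)] H_emb_apply[OF sr(2)] by simp
  qed
  ultimately have "H_prod X closure_of (H_emb X ` HM X) \<subseteq> D"
    by (intro closure_of_minimal) auto
  then show ?thesis using \<nu> unfolding topspace_HX D_def s_def r_def by blast
qed

lemma Hmap_apply_avg_fun:
  assumes "continuous_map X Y f" "continuous_map Y euclideanreal \<psi>" "0 \<le> a" "a < b" "b \<le> 1"
  shows "Hmap X Y f \<nu> (avg_fun Y \<psi> a b) = \<nu> (avg_fun X (\<psi> \<circ> f) a b)"
proof -
  have "H_pull X f (avg_fun Y \<psi> a b) = avg_fun X (\<psi> \<circ> f) a b"
    by (rule H_pull_avg_fun) (use assms in \<open>auto simp: continuous_map_def\<close>)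
  then show ?thesis using avg_fun_in_S_HM[OF assms(2-5)] by (simp add: Hmap_def)
qed

lemma compact_Hausdorff_imp_completely_regular_space:
  "compact_space X \<Longrightarrow> Hausdorff_space X \<Longrightarrow> completely_regular_space X"
  by (simp add: compact_Hausdorff_or_regular_imp_normal_space normal_imp_completely_regular_space)

lemma Urysohn_image_separation:
  assumes X: "compact_space X" and Y: "compact_space Y" "Hausdorff_space Y"
    and f: "continuous_map X Y f" and C: "closedin X C"
    and y: "y \<in> topspace Y" "y \<notin> f ` C"
  obtains \<psi> where "continuous_map Y euclideanreal \<psi>" "\<psi> y = 0"
    "\<And>z. z \<in> topspace Y \<Longrightarrow> \<psi> z \<in> {0..1}" "\<And>x. x \<in> C \<Longrightarrow> \<psi> (f x) = 1"
proof -
  have "compactin Y (f ` C)"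
    using image_compactin[OF closedin_compact_space[OF X C] f] .
  then have "closedin Y (f ` C)" using Y(2) compactin_imp_closedin by blast
  with y compact_Hausdorff_imp_completely_regular_space[OF Y]
  obtain \<psi> :: "_ \<Rightarrow> real" where "continuous_map Y (top_of_set {0..1}) \<psi>" "\<psi> y = 0" "\<psi> ` (f ` C) \<subseteq> {1}"
    unfolding completely_regular_space_def by (metis Diff_iff)
  then show ?thesis
    using that by (auto simp: continuous_map_in_subtopology Pi_iff image_subset_iff)
qed

lemma Hmap_fibre_const_step_approx:
  assumes X: "compact_space X" and Y: "compact_space Y" "Hausdorff_space Y"
    and f: "continuous_map X Y f"
    and y: "y \<in> topspace Y" and fibre: "{x' \<in> topspace X. f x' = y} = {x}"
    and \<nu>: "\<nu> \<in> topspace (HX X)" "Hmap X Y f \<nu> = H_emb Y (const_step y)"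
    and \<phi>: "continuous_map X euclideanreal \<phi>" and ab: "0 \<le> a" "a < b" "b \<le> 1"
    and "0 < \<epsilon>"
  shows "\<bar>\<nu> (avg_fun X \<phi> a b) - \<phi> x\<bar> \<le> \<epsilon>"
proof -
  have x: "x \<in> topspace X" using fibre by auto
  have fX: "\<And>x'. x' \<in> topspace X \<Longrightarrow> f x' \<in> topspace Y"
    using f by (auto simp: continuous_map_def)
  obtain B where B: "\<And>x. x \<in> topspace X \<Longrightarrow> \<bar>\<phi> x\<bar> \<le> B"
    using continuous_map_real_bounded[OF X \<phi>] by blast
  define C where "C = {x' \<in> topspace X. \<epsilon> \<le> \<bar>\<phi> x' - \<phi> x\<bar>}"
  have "closedin X C" unfolding C_def by (intro closedin_le_real continuous_intros \<phi>)
  moreover have "y \<notin> f ` C"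
  proof
    assume "y \<in> f ` C"
    then obtain x' where "x' \<in> C" "f x' = y" by blast
    with fibre have "x' = x" unfolding C_def by blast
    with \<open>x' \<in> C\<close> \<open>0 < \<epsilon>\<close> show False by (simp add: C_def)
  qed
  ultimately obtain \<psi> where \<psi>: "continuous_map Y euclideanreal \<psi>" "\<psi> y = 0"
    "\<And>z. z \<in> topspace Y \<Longrightarrow> \<psi> z \<in> {0..1}" "\<And>x'. x' \<in> C \<Longrightarrow> \<psi> (f x') = 1"
    using Urysohn_image_separation[OF X Y f _ y] by metis
  have "\<bar>\<phi> x' - \<phi> x\<bar> \<le> \<epsilon> + 2 * B * (\<psi> \<circ> f) x'" if x': "x' \<in> topspace X" for x'
  proof (cases "x' \<in> C")
    case True
    then show ?thesis using \<psi>(4) B[OF x'] B[OF x] \<open>0 < \<epsilon>\<close> by simp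
  next
    case False
    have "0 \<le> B * \<psi> (f x')" using \<psi>(3)[OF fX[OF x']] B[OF x'] by simp
    then show ?thesis using False x' by (simp add: C_def)
  qed
  then have "\<bar>\<nu> (avg_fun X \<phi> a b) - \<phi> x\<bar> \<le> \<epsilon> + 2 * B * \<nu> (avg_fun X (\<psi> \<circ> f) a b)"
    by (rule HX_avg_fun_bound[OF \<nu>(1) \<phi> continuous_map_compose[OF f \<psi>(1)] ab])
  moreover have "\<nu> (avg_fun X (\<psi> \<circ> f) a b) = \<psi> y"
    using Hmap_apply_avg_fun[OF f \<psi>(1) ab, of \<nu>] \<nu>(2) H_emb_apply[OF avg_fun_in_S_HM[OF \<psi>(1) ab]]
      avg_fun_const_step[OF ab y] by simp
  ultimately show ?thesis using \<psi>(2) by simp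
qed

lemma Hmap_fibre_const_step:
  assumes X: "compact_space X" and Y: "compact_space Y" "Hausdorff_space Y"
    and f: "continuous_map X Y f"
    and y: "y \<in> topspace Y" and fibre: "{x' \<in> topspace X. f x' = y} = {x}"
  shows "{\<nu> \<in> topspace (HX X). Hmap X Y f \<nu> = H_emb Y (const_step y)} = {H_emb X (const_step x)}"
proof -
  have x: "x \<in> topspace X" "f x = y" using fibre by auto
  have cx: "const_step x \<in> HM X" by (rule const_step_in_HM[OF x(1)])
  have "Hmap X Y f (H_emb X (const_step x)) = H_emb Y (const_step y)"
    using Hmap_H_emb[OF f cx] x(2) by (simp cong: restrict_cong)
  moreover have "\<nu> = H_emb X (const_step x)"
    if "\<nu> \<in> topspace (HX X)" "Hmap X Y f \<nu> = H_emb Y (const_step y)" for \<nu>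
  proof (rule HX_eqI[OF that(1) H_emb_in_HX[OF cx]])
    fix s assume s: "s \<in> S_HM X"
    then obtain \<phi> a b where s_eq: "s = avg_fun X \<phi> a b"
      and \<phi>: "continuous_map X euclideanreal \<phi>" and ab: "0 \<le> a" "a < b" "b \<le> 1"
      by (rule S_HM_E)
    have "\<bar>\<nu> s - \<phi> x\<bar> \<le> 0"
      unfolding s_eq
      by (rule field_le_epsilon) (simp add: Hmap_fibre_const_step_approx[OF X Y f y fibre that \<phi> ab])
    then show "\<nu> s = H_emb X (const_step x) s"
      using H_emb_apply[OF s] avg_fun_const_step[OF ab x(1)] s_eq by simp
  qed
  ultimately show ?thesis using H_emb_in_HX[OF cx] by blast
qed

lemma closedin_Hmap_image_complement:
  assumes X: "compact_space X" and f: "continuous_map X Y f" and N: "openin (H_prod X) N"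
  shows "closedin (H_prod Y) (Hmap X Y f ` (topspace (HX X) - N))"
proof -
  have "openin (HX X) (N \<inter> H_prod X closure_of (H_emb X ` HM X))"
    unfolding HX_def using N by (rule openin_subtopology_Int)
  moreover have "topspace (HX X) - (topspace (HX X) - N) = N \<inter> H_prod X closure_of (H_emb X ` HM X)"
    unfolding topspace_HX by blast
  ultimately have "closedin (HX X) (topspace (HX X) - N)" unfolding closedin_def by auto
  then have "compactin (HX X) (topspace (HX X) - N)"
    using compact_space_HX[OF X] by (rule closedin_compact_space[rotated])
  moreover have "continuous_map (HX X) (H_prod Y) (Hmap X Y f)"
    unfolding HX_def by (rule continuous_map_from_subtopology[OF continuous_map_Hmap[OF f]])
  ultimately have "compactin (H_prod Y) (Hmap X Y f ` (topspace (HX X) - N))" by (rule image_compactin)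
  then show ?thesis
    by (rule compactin_imp_closedin[rotated]) (simp add: H_prod_def Hausdorff_space_product_topology)
qed

lemma Hmap_singleton_fibre_nhood:
  assumes X: "compact_space X" and f: "continuous_map X Y f"
    and fibre: "{\<mu> \<in> topspace (HX X). Hmap X Y f \<mu> = Hmap X Y f \<nu>} = {\<nu>}"
    and N: "openin (H_prod X) N" "\<nu> \<in> N"
  obtains \<alpha> where "\<alpha> \<in> HM X"
    "\<And>\<beta>. \<beta> \<in> HM X \<Longrightarrow> (\<forall>t\<in>{0..<1}. f (\<beta> t) = f (\<alpha> t)) \<Longrightarrow> H_emb X \<beta> \<in> N"
proof -
  have \<nu>: "\<nu> \<in> topspace (HX X)" using fibre by blast
  define K where "K = topspace (HX X) - N"
  have "closedin (H_prod Y) (Hmap X Y f ` K)"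
    unfolding K_def by (rule closedin_Hmap_image_complement[OF X f N(1)])
  then have M: "openin (H_prod Y) (topspace (H_prod Y) - Hmap X Y f ` K)"
    by (rule openin_diff[OF openin_topspace])
  define P where "P = {\<mu> \<in> topspace (H_prod X). Hmap X Y f \<mu> \<in> topspace (H_prod Y) - Hmap X Y f ` K}"
  have "openin (H_prod X) P"
    unfolding P_def by (rule openin_continuous_map_preimage[OF continuous_map_Hmap[OF f] M])
  moreover have "Hmap X Y f \<nu> \<notin> Hmap X Y f ` K"
  proof
    assume "Hmap X Y f \<nu> \<in> Hmap X Y f ` K"
    then obtain \<mu> where "\<mu> \<in> K" "Hmap X Y f \<mu> = Hmap X Y f \<nu>" by auto
    then have "\<mu> = \<nu>" using fibre unfolding K_def by blast
    with \<open>\<mu> \<in> K\<close> N(2) show False unfolding K_def by blast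
  qed
  then have "\<nu> \<in> P"
    using \<nu> topspace_HX_subset continuous_map_image_subset_topspace[OF continuous_map_Hmap[OF f]]
    unfolding P_def by blast
  moreover have "\<nu> \<in> H_prod X closure_of (H_emb X ` HM X)" using \<nu> topspace_HX by blast
  ultimately obtain \<alpha> where \<alpha>: "\<alpha> \<in> HM X" "H_emb X \<alpha> \<in> P"
    unfolding in_closure_of by blast
  have "H_emb X \<beta> \<in> N" if \<beta>: "\<beta> \<in> HM X" "\<forall>t\<in>{0..<1}. f (\<beta> t) = f (\<alpha> t)" for \<beta>
  proof (rule ccontr)
    assume "H_emb X \<beta> \<notin> N"
    then have "H_emb X \<beta> \<in> K" unfolding K_def using H_emb_in_HX[OF \<beta>(1)] by blast
    moreover have "step_comp f \<beta> = step_comp f \<alpha>" using \<beta>(2) by (intro restrict_ext) simp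
    ultimately show False
      using \<alpha>(2) Hmap_H_emb[OF f \<alpha>(1)] Hmap_H_emb[OF f \<beta>(1)] unfolding P_def
      by (metis (no_types, lifting) DiffD2 image_eqI mem_Collect_eq)
  qed
  with \<alpha>(1) show ?thesis using that by blast
qed

lemma open_map_separating_function:
  assumes X: "compact_space X" "Hausdorff_space X" and f: "open_map X Y f"
    and p: "p \<in> topspace X" and q: "q \<in> topspace X" "p \<noteq> q" "f p = y" "f q = y"
  shows "\<exists>\<phi> W. continuous_map X euclideanreal \<phi> \<and> openin Y W \<and> y \<in> W \<and>
    (\<forall>y'\<in>W. \<exists>p'\<in>topspace X. \<exists>q'\<in>topspace X. f p' = y' \<and> f q' = y' \<and> \<phi> p' < 1/3 \<and> 2/3 < \<phi> q')"
proof -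
  have "closedin X {q}" "p \<in> topspace X - {q}"
    using closedin_Hausdorff_singleton[OF X(2) q(1)] p q(2) by auto
  with compact_Hausdorff_imp_completely_regular_space[OF X]
  obtain \<phi> :: "_ \<Rightarrow> real" where \<phi>: "continuous_map X (top_of_set {0..1}) \<phi>" "\<phi> p = 0" "\<phi> ` {q} \<subseteq> {1}"
    unfolding completely_regular_space_def by metis
  then have \<phi>c: "continuous_map X euclideanreal \<phi>" by (simp add: continuous_map_in_subtopology)
  define U where "U = {x \<in> topspace X. \<phi> x \<in> {..<1/3}}"
  define V where "V = {x \<in> topspace X. \<phi> x \<in> {2/3<..}}"
  have "openin X U" "openin X V"
    unfolding U_def V_def by (rule openin_continuous_map_preimage[OF \<phi>c], simp)+
  then have "openin Y (f ` U \<inter> f ` V)" using f unfolding open_map_def by blast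
  moreover have "p \<in> U" "q \<in> V" using p q(1) \<phi>(2,3) unfolding U_def V_def by auto
  then have "y \<in> f ` U \<inter> f ` V" using q(3,4) by (metis IntI image_eqI)
  moreover have "\<forall>y'\<in>f ` U \<inter> f ` V. \<exists>p'\<in>topspace X. \<exists>q'\<in>topspace X. f p' = y' \<and> f q' = y' \<and> \<phi> p' < 1/3 \<and> 2/3 < \<phi> q'"
    unfolding U_def V_def by fastforce
  ultimately show ?thesis using \<phi>c by blast
qed

lemma finite_separating_family:
  fixes X :: "'a topology" and Y :: "'b topology" and f :: "'a \<Rightarrow> 'b"
  assumes X: "compact_space X" "Hausdorff_space X" and Y: "compact_space Y"
    and f: "continuous_map X Y f" "open_map X Y f"
    and nondegenerate: "\<And>y. y \<in> topspace Y \<Longrightarrow> \<exists>p q. p \<in> topspace X \<and> q \<in> topspace X \<and> p \<noteq> q \<and> f p = y \<and> f q = y"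
  obtains K :: "'b set" and \<Phi> :: "'b \<Rightarrow> 'a \<Rightarrow> real"
  where "finite K" "\<And>k. k \<in> K \<Longrightarrow> continuous_map X euclideanreal (\<Phi> k)"
    "\<forall>x\<in>topspace X. \<exists>k. k \<in> K \<and> (\<exists>p. p \<in> topspace X \<and> f p = f x \<and> \<Phi> k p < 1/3) \<and>
       (\<exists>q. q \<in> topspace X \<and> f q = f x \<and> 2/3 < \<Phi> k q)"
proof -
  define separates where "separates \<phi> W \<longleftrightarrow> continuous_map X euclideanreal \<phi> \<and> openin Y W \<and>
    (\<forall>y'\<in>W. \<exists>p\<in>topspace X. \<exists>q\<in>topspace X. f p = y' \<and> f q = y' \<and> \<phi> p < 1/3 \<and> 2/3 < \<phi> q)" for \<phi> W
  have "\<forall>y\<in>topspace Y. \<exists>\<phi> W. separates \<phi> W \<and> y \<in> W"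
  proof
    fix y assume y: "y \<in> topspace Y"
    obtain p q where pq: "p \<in> topspace X" "q \<in> topspace X" "p \<noteq> q" "f p = y" "f q = y"
      using nondegenerate[OF y] by blast
    show "\<exists>\<phi> W. separates \<phi> W \<and> y \<in> W"
      unfolding separates_def using open_map_separating_function[OF X f(2) pq] by blast
  qed
  from bchoice[OF this] obtain \<Phi> where "\<forall>y\<in>topspace Y. \<exists>W. separates (\<Phi> y) W \<and> y \<in> W" ..
  from bchoice[OF this] obtain W where sep: "\<forall>y\<in>topspace Y. separates (\<Phi> y) (W y) \<and> y \<in> W y" ..
  have "compactin Y (topspace Y)" using Y by (simp add: compact_space_def)
  moreover have "\<forall>U\<in>W ` topspace Y. openin Y U" "topspace Y \<subseteq> \<Union>(W ` topspace Y)"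
    using sep unfolding separates_def by blast+
  ultimately obtain \<F> where "finite \<F>" "\<F> \<subseteq> W ` topspace Y" "topspace Y \<subseteq> \<Union>\<F>"
    unfolding compactin_def by meson
  then obtain K where K: "K \<subseteq> topspace Y" "finite K" "topspace Y \<subseteq> (\<Union>k\<in>K. W k)"
    by (metis finite_subset_image)
  show ?thesis
  proof (rule that[OF K(2)])
    show "continuous_map X euclideanreal (\<Phi> k)" if "k \<in> K" for k
    proof -
      have "separates (\<Phi> k) (W k)" using sep K(1) that by blast
      then show ?thesis by (simp add: separates_def)
    qed
    show "\<forall>x\<in>topspace X. \<exists>k. k \<in> K \<and> (\<exists>p. p \<in> topspace X \<and> f p = f x \<and> \<Phi> k p < 1/3) \<and>
      (\<exists>q. q \<in> topspace X \<and> f q = f x \<and> 2/3 < \<Phi> k q)"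
    proof
      fix x assume "x \<in> topspace X"
      then obtain k where "k \<in> K" "f x \<in> W k"
        using K(3) f(1) by (auto simp: continuous_map_def)
      then show "\<exists>k. k \<in> K \<and> (\<exists>p. p \<in> topspace X \<and> f p = f x \<and> \<Phi> k p < 1/3) \<and>
        (\<exists>q. q \<in> topspace X \<and> f q = f x \<and> 2/3 < \<Phi> k q)"
        using sep K(1) unfolding separates_def by blast
    qed
  qed
qed

lemma finite_fibrewise_separation:
  fixes X :: "'a topology" and Y :: "'b topology" and f :: "'a \<Rightarrow> 'b"
  assumes X: "compact_space X" "Hausdorff_space X" and Y: "compact_space Y"
    and f: "continuous_map X Y f" "open_map X Y f"
    and nondegenerate: "\<And>y. y \<in> topspace Y \<Longrightarrow> \<exists>p q. p \<in> topspace X \<and> q \<in> topspace X \<and> p \<noteq> q \<and> f p = y \<and> f q = y"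
  obtains K :: "'b set" and \<Phi> :: "'b \<Rightarrow> 'a \<Rightarrow> real" and \<kappa> :: "'a \<Rightarrow> 'b" and lo hi :: "'a \<Rightarrow> 'a"
  where "finite K" "\<And>k. k \<in> K \<Longrightarrow> continuous_map X euclideanreal (\<Phi> k)"
    "\<And>x. x \<in> topspace X \<Longrightarrow> \<kappa> x \<in> K \<and> lo x \<in> topspace X \<and> hi x \<in> topspace X \<and>
       f (lo x) = f x \<and> f (hi x) = f x \<and> \<Phi> (\<kappa> x) (lo x) < 1/3 \<and> 2/3 < \<Phi> (\<kappa> x) (hi x)"
proof (rule finite_separating_family[OF assms])
  fix K :: "'b set" and \<Phi> :: "'b \<Rightarrow> 'a \<Rightarrow> real"
  assume K: "finite K" "\<And>k. k \<in> K \<Longrightarrow> continuous_map X euclideanreal (\<Phi> k)"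
    and cover: "\<forall>x\<in>topspace X. \<exists>k. k \<in> K \<and> (\<exists>p. p \<in> topspace X \<and> f p = f x \<and> \<Phi> k p < 1/3) \<and>
       (\<exists>q. q \<in> topspace X \<and> f q = f x \<and> 2/3 < \<Phi> k q)"
  from bchoice[OF cover] obtain \<kappa> where \<kappa>: "\<forall>x\<in>topspace X. \<kappa> x \<in> K \<and> (\<exists>p. p \<in> topspace X \<and> f p = f x \<and> \<Phi> (\<kappa> x) p < 1/3) \<and>
      (\<exists>q. q \<in> topspace X \<and> f q = f x \<and> 2/3 < \<Phi> (\<kappa> x) q)" ..
  have "\<forall>x\<in>topspace X. \<exists>p. p \<in> topspace X \<and> f p = f x \<and> \<Phi> (\<kappa> x) p < 1/3"
    using \<kappa> by (simp only: Ball_def) blast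
  from bchoice[OF this] obtain lo where lo: "\<forall>x\<in>topspace X. lo x \<in> topspace X \<and> f (lo x) = f x \<and> \<Phi> (\<kappa> x) (lo x) < 1/3" ..
  have "\<forall>x\<in>topspace X. \<exists>q. q \<in> topspace X \<and> f q = f x \<and> 2/3 < \<Phi> (\<kappa> x) q"
    using \<kappa> by (simp only: Ball_def) blast
  from bchoice[OF this] obtain hi where hi: "\<forall>x\<in>topspace X. hi x \<in> topspace X \<and> f (hi x) = f x \<and> 2/3 < \<Phi> (\<kappa> x) (hi x)" ..
  show ?thesis
  proof (rule that[where \<Phi>=\<Phi> and \<kappa>=\<kappa> and lo=lo and hi=hi, OF K])
    show "\<kappa> x \<in> K \<and> lo x \<in> topspace X \<and> hi x \<in> topspace X \<and>
       f (lo x) = f x \<and> f (hi x) = f x \<and> \<Phi> (\<kappa> x) (lo x) < 1/3 \<and> 2/3 < \<Phi> (\<kappa> x) (hi x)"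
      if "x \<in> topspace X" for x
      using \<kappa>[rule_format, OF that] lo[rule_format, OF that] hi[rule_format, OF that] by blast
  qed
qed

lemma sum_avg_fun_step_comp_ge:
  fixes \<Phi> :: "'k \<Rightarrow> 'a \<Rightarrow> real"
  assumes \<alpha>: "\<alpha> \<in> HM X" and K: "finite K"
    and G: "\<And>k x. x \<in> topspace X \<Longrightarrow> G k x \<in> topspace X"
    and G': "\<And>k x. x \<in> topspace X \<Longrightarrow> G' k x \<in> topspace X"
    and gap: "\<And>x. x \<in> topspace X \<Longrightarrow> c \<le> (\<Sum>k\<in>K. \<Phi> k (G' k x) - \<Phi> k (G k x))"
  shows "c \<le> (\<Sum>k\<in>K. avg_fun X (\<Phi> k) 0 1 (step_comp (G' k) \<alpha>) - avg_fun X (\<Phi> k) 0 1 (step_comp (G k) \<alpha>))"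
proof -
  have avg: "avg_fun X (\<Phi> k) 0 1 (step_comp H \<alpha>) = integral {0..1} (\<lambda>t. \<Phi> k (H (\<alpha> t)))"
    if H: "\<And>x. x \<in> topspace X \<Longrightarrow> H x \<in> topspace X" for H k
  proof -
    have "avg_fun X (\<Phi> k) 0 1 (step_comp H \<alpha>) = avg_fun X (\<Phi> k \<circ> H) 0 1 \<alpha>"
      by (rule avg_fun_step_comp[OF \<alpha> H]) simp_all
    then show ?thesis using \<alpha> by (simp add: avg_fun_def)
  qed
  have "c = integral {0..1} (\<lambda>t::real. c)" by simp
  also have "\<dots> \<le> integral {0..1} (\<lambda>t. \<Sum>k\<in>K. \<Phi> k (G' k (\<alpha> t)) - \<Phi> k (G k (\<alpha> t)))"
    using HM_integral_mono[OF \<alpha>, of 0 1 "\<lambda>_. c" "\<lambda>x. \<Sum>k\<in>K. \<Phi> k (G' k x) - \<Phi> k (G k x)"] gap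
    by simp
  also have "\<dots> = (\<Sum>k\<in>K. integral {0..1} (\<lambda>t. \<Phi> k (G' k (\<alpha> t)) - \<Phi> k (G k (\<alpha> t))))"
    by (rule integral_sum[OF K]) (rule integrable_HM[OF \<alpha>]; simp)
  also have "\<dots> = (\<Sum>k\<in>K. avg_fun X (\<Phi> k) 0 1 (step_comp (G' k) \<alpha>) - avg_fun X (\<Phi> k) 0 1 (step_comp (G k) \<alpha>))"
  proof (rule sum.cong)
    fix k assume "k \<in> K"
    have "integral {0..1} (\<lambda>t. \<Phi> k (G' k (\<alpha> t)) - \<Phi> k (G k (\<alpha> t)))
        = integral {0..1} (\<lambda>t. \<Phi> k (G' k (\<alpha> t))) - integral {0..1} (\<lambda>t. \<Phi> k (G k (\<alpha> t)))"
      by (rule integral_diff) (rule integrable_HM[OF \<alpha>]; simp)+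
    then show "integral {0..1} (\<lambda>t. \<Phi> k (G' k (\<alpha> t)) - \<Phi> k (G k (\<alpha> t)))
        = avg_fun X (\<Phi> k) 0 1 (step_comp (G' k) \<alpha>) - avg_fun X (\<Phi> k) 0 1 (step_comp (G k) \<alpha>)"
      using avg[of "G k"] avg[of "G' k"] G G' by simp
  qed simp
  finally show ?thesis .
qed

lemma Hmap_singleton_fibre_approx:
  assumes X: "compact_space X" and f: "continuous_map X Y f"
    and fibre: "{\<mu> \<in> topspace (HX X). Hmap X Y f \<mu> = Hmap X Y f \<nu>} = {\<nu>}"
    and K: "finite K" and s: "\<And>k. k \<in> K \<Longrightarrow> s k \<in> S_HM X" and "0 < \<epsilon>"
  obtains \<alpha> where "\<alpha> \<in> HM X"
    "\<And>\<beta> k. \<beta> \<in> HM X \<Longrightarrow> \<forall>t\<in>{0..<1}. f (\<beta> t) = f (\<alpha> t) \<Longrightarrow> k \<in> K \<Longrightarrow> \<bar>s k \<beta> - \<nu> (s k)\<bar> < \<epsilon>"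
proof -
  define N where "N = (\<Inter>k\<in>K. {\<mu> \<in> topspace (H_prod X). \<mu> (s k) \<in> {\<nu> (s k) - \<epsilon> <..< \<nu> (s k) + \<epsilon>}})
    \<inter> topspace (H_prod X)"
  have "openin (H_prod X) N"
    unfolding N_def
    by (intro openin_INT K openin_continuous_map_preimage[OF continuous_map_H_prod_apply[OF s]])
       (simp_all flip: open_openin)
  moreover have "\<nu> \<in> N"
    using fibre topspace_HX_subset \<open>0 < \<epsilon>\<close> unfolding N_def by auto
  ultimately obtain \<alpha> where \<alpha>: "\<alpha> \<in> HM X"
    and in_N: "\<And>\<beta>. \<beta> \<in> HM X \<Longrightarrow> \<forall>t\<in>{0..<1}. f (\<beta> t) = f (\<alpha> t) \<Longrightarrow> H_emb X \<beta> \<in> N"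
    using Hmap_singleton_fibre_nhood[OF X f fibre] by blast
  have "\<bar>s k \<beta> - \<nu> (s k)\<bar> < \<epsilon>"
    if "\<beta> \<in> HM X" "\<forall>t\<in>{0..<1}. f (\<beta> t) = f (\<alpha> t)" "k \<in> K" for \<beta> k
    using in_N[OF that(1,2)] that(3) H_emb_apply[OF s[OF that(3)]] unfolding N_def
    by (auto simp: abs_less_iff)
  with \<alpha> show ?thesis using that by blast
qed

definition fibre_switch :: "('a \<Rightarrow> 'k) \<Rightarrow> ('a \<Rightarrow> 'a) \<Rightarrow> 'k \<Rightarrow> 'a \<Rightarrow> 'a" where
  "fibre_switch \<kappa> g k x = (if \<kappa> x = k then g x else x)"

lemma sum_avg_fun_fibre_switch_ge:
  assumes \<alpha>: "\<alpha> \<in> HM X" and K: "finite K"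
    and sep: "\<And>x. x \<in> topspace X \<Longrightarrow> \<kappa> x \<in> K \<and> lo x \<in> topspace X \<and> hi x \<in> topspace X \<and>
       \<Phi> (\<kappa> x) (lo x) < 1/3 \<and> 2/3 < \<Phi> (\<kappa> x) (hi x)"
  shows "1/3 \<le> (\<Sum>k\<in>K. avg_fun X (\<Phi> k) 0 1 (step_comp (fibre_switch \<kappa> hi k) \<alpha>)
                       - avg_fun X (\<Phi> k) 0 1 (step_comp (fibre_switch \<kappa> lo k) \<alpha>))"
proof (rule sum_avg_fun_step_comp_ge[OF \<alpha> K])
  fix x assume x: "x \<in> topspace X"
  have "(\<Sum>k\<in>K. \<Phi> k (fibre_switch \<kappa> hi k x) - \<Phi> k (fibre_switch \<kappa> lo k x))
      = (\<Sum>k\<in>K. if \<kappa> x = k then \<Phi> k (hi x) - \<Phi> k (lo x) else 0)"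
    by (rule sum.cong) (simp_all add: fibre_switch_def)
  also have "\<dots> = \<Phi> (\<kappa> x) (hi x) - \<Phi> (\<kappa> x) (lo x)" using sep[OF x] K by simp
  finally show "1/3 \<le> (\<Sum>k\<in>K. \<Phi> k (fibre_switch \<kappa> hi k x) - \<Phi> k (fibre_switch \<kappa> lo k x))"
    using sep[OF x] by simp
qed (use sep in \<open>simp_all add: fibre_switch_def\<close>)

lemma Hmap_fibre_not_singleton:
  assumes X: "compact_space X" and f: "continuous_map X Y f"
    and K: "finite K" and \<Phi>: "\<And>k. k \<in> K \<Longrightarrow> continuous_map X euclideanreal (\<Phi> k)"
    and sep: "\<And>x. x \<in> topspace X \<Longrightarrow> \<kappa> x \<in> K \<and> lo x \<in> topspace X \<and> hi x \<in> topspace X \<and>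
       f (lo x) = f x \<and> f (hi x) = f x \<and> \<Phi> (\<kappa> x) (lo x) < 1/3 \<and> 2/3 < \<Phi> (\<kappa> x) (hi x)"
  shows "{\<mu> \<in> topspace (HX X). Hmap X Y f \<mu> = Hmap X Y f \<nu>} \<noteq> {\<nu>}"
proof
  assume fibre: "{\<mu> \<in> topspace (HX X). Hmap X Y f \<mu> = Hmap X Y f \<nu>} = {\<nu>}"
  define \<epsilon> :: real where "\<epsilon> = 1 / (6 * (card K + 1))"
  have "0 < \<epsilon>" by (simp add: \<epsilon>_def)
  define s where "s k = avg_fun X (\<Phi> k) 0 1" for k
  have s: "s k \<in> S_HM X" if "k \<in> K" for k
    unfolding s_def using avg_fun_in_S_HM[OF \<Phi>[OF that]] by simp
  obtain \<alpha> where \<alpha>: "\<alpha> \<in> HM X" and close: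
    "\<And>\<beta> k. \<beta> \<in> HM X \<Longrightarrow> \<forall>t\<in>{0..<1}. f (\<beta> t) = f (\<alpha> t) \<Longrightarrow> k \<in> K \<Longrightarrow> \<bar>s k \<beta> - \<nu> (s k)\<bar> < \<epsilon>"
    using Hmap_singleton_fibre_approx[where s=s, OF X f fibre K s \<open>0 < \<epsilon>\<close>] by blast
  have near: "\<bar>s k (step_comp (fibre_switch \<kappa> g k) \<alpha>) - \<nu> (s k)\<bar> < \<epsilon>"
    if k: "k \<in> K" and g: "\<And>x. x \<in> topspace X \<Longrightarrow> g x \<in> topspace X \<and> f (g x) = f x" for k g
  proof (rule close[OF _ _ k])
    have G: "\<And>x. x \<in> topspace X \<Longrightarrow> fibre_switch \<kappa> g k x \<in> topspace X \<and> f (fibre_switch \<kappa> g k x) = f x"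
      using g by (simp add: fibre_switch_def)
    then show "step_comp (fibre_switch \<kappa> g k) \<alpha> \<in> HM X" using step_comp_in_HM[OF \<alpha>] by blast
    show "\<forall>t\<in>{0..<1}. f (step_comp (fibre_switch \<kappa> g k) \<alpha> t) = f (\<alpha> t)"
      using G HM_in_topspace[OF \<alpha>] by simp
  qed
  have lo: "\<And>x. x \<in> topspace X \<Longrightarrow> lo x \<in> topspace X \<and> f (lo x) = f x"
    and hi: "\<And>x. x \<in> topspace X \<Longrightarrow> hi x \<in> topspace X \<and> f (hi x) = f x"
    using sep by simp_all
  have "\<And>x. x \<in> topspace X \<Longrightarrow> \<kappa> x \<in> K \<and> lo x \<in> topspace X \<and> hi x \<in> topspace X \<and>
       \<Phi> (\<kappa> x) (lo x) < 1/3 \<and> 2/3 < \<Phi> (\<kappa> x) (hi x)"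
    using sep by simp
  then have "1/3 \<le> (\<Sum>k\<in>K. s k (step_comp (fibre_switch \<kappa> hi k) \<alpha>) - s k (step_comp (fibre_switch \<kappa> lo k) \<alpha>))"
    unfolding s_def by (rule sum_avg_fun_fibre_switch_ge[OF \<alpha> K])
  also have "\<dots> \<le> (\<Sum>k\<in>K. 2 * \<epsilon>)"
  proof (rule sum_mono)
    fix k assume k: "k \<in> K"
    show "s k (step_comp (fibre_switch \<kappa> hi k) \<alpha>) - s k (step_comp (fibre_switch \<kappa> lo k) \<alpha>) \<le> 2 * \<epsilon>"
      using near[OF k hi] near[OF k lo] by (simp add: abs_less_iff)
  qed
  also have "\<dots> < 1/3" by (simp add: \<epsilon>_def field_simps)
  finally show False by simp
qed

lemma two_points_in_fibre:
  assumes "f ` topspace X = topspace Y" "\<not> has_degenerate_fiber X Y f" "y \<in> topspace Y"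
  shows "\<exists>p q. p \<in> topspace X \<and> q \<in> topspace X \<and> p \<noteq> q \<and> f p = y \<and> f q = y"
proof -
  have "y \<in> f ` topspace X" using assms(1,3) by simp
  then obtain p where p: "p \<in> topspace X" "f p = y" by blast
  have "\<exists>q. q \<in> topspace X \<and> f q = y \<and> q \<noteq> p"
  proof (rule ccontr)
    assume "\<nexists>q. q \<in> topspace X \<and> f q = y \<and> q \<noteq> p"
    then have "{x \<in> topspace X. f x = y} = {p}" using p by blast
    with assms(2,3) show False unfolding has_degenerate_fiber_def by blast
  qed
  then show ?thesis using p by blast
qed

theorem lemma4p1:
  fixes X :: "'a topology" and Y :: "'b topology" and f :: "'a \<Rightarrow> 'b"
  assumes "compact_space X" and "Hausdorff_space X"
    and "compact_space Y" and "Hausdorff_space Y"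
    and "continuous_map X Y f" and "f ` topspace X = topspace Y" and "open_map X Y f"
  shows "has_degenerate_fiber (HX X) (HX Y) (Hmap X Y f) \<longleftrightarrow> has_degenerate_fiber X Y f"
proof
  assume "has_degenerate_fiber (HX X) (HX Y) (Hmap X Y f)"
  then obtain \<nu>0 \<nu> where fibre: "{\<mu> \<in> topspace (HX X). Hmap X Y f \<mu> = \<nu>0} = {\<nu>}"
    unfolding has_degenerate_fiber_def by blast
  then have "\<nu> \<in> {\<mu> \<in> topspace (HX X). Hmap X Y f \<mu> = \<nu>0}" by simp
  then have "\<nu>0 = Hmap X Y f \<nu>" by simp
  show "has_degenerate_fiber X Y f"
  proof (rule ccontr)
    assume "\<not> has_degenerate_fiber X Y f"
    then have nondegenerate: "\<And>y. y \<in> topspace Y \<Longrightarrow> \<exists>p q. p \<in> topspace X \<and> q \<in> topspace X \<and> p \<noteq> q \<and> f p = y \<and> f q = y"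
      by (rule two_points_in_fibre[OF assms(6)])
    show False
    proof (rule finite_fibrewise_separation[OF assms(1-3,5,7) nondegenerate])
      fix K \<Phi> \<kappa> lo hi
      assume "finite K" "\<And>k. k \<in> K \<Longrightarrow> continuous_map X euclideanreal (\<Phi> k)"
        "\<And>x. x \<in> topspace X \<Longrightarrow> \<kappa> x \<in> K \<and> lo x \<in> topspace X \<and> hi x \<in> topspace X \<and>
           f (lo x) = f x \<and> f (hi x) = f x \<and> \<Phi> (\<kappa> x) (lo x) < 1/3 \<and> 2/3 < \<Phi> (\<kappa> x) (hi x)"
      from Hmap_fibre_not_singleton[OF assms(1,5) this] fibre \<open>\<nu>0 = Hmap X Y f \<nu>\<close> show False
        by simp
    qed
  qed
next
  assume "has_degenerate_fiber X Y f"
  then obtain y x where y: "y \<in> topspace Y" and "{x' \<in> topspace X. f x' = y} = {x}"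
    unfolding has_degenerate_fiber_def by blast
  then have "{\<nu> \<in> topspace (HX X). Hmap X Y f \<nu> = H_emb Y (const_step y)} = {H_emb X (const_step x)}"
    by (rule Hmap_fibre_const_step[OF assms(1,3,4,5)])
  with H_emb_in_HX[OF const_step_in_HM[OF y]] show "has_degenerate_fiber (HX X) (HX Y) (Hmap X Y f)"
    unfolding has_degenerate_fiber_def by blast
qed
end
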